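(* Let $(U,\mathcal{S},w,k',p')$ be an instance of the maximization version of $k'$-WEC, and for $1\le i\le k'$ let $\mathcal{S}_i=\{S\in\mathcal{S}:|S|=i\}$. For each $1\le i\le k'$ let $\widehat{\mathcal{S}}_i\subseteq\mathcal{S}_i$ be a subfamily that max represents $\mathcal{S}_i$ with respect to universe $U$, integers $k'$ and $i$, and weight function $w$, and let $\widehat{\mathcal{S}}=\bigcup_{i=1}^{k'}\widehat{\mathcal{S}}_i$. Then $(U,\mathcal{S},w,k',p')$ is a yes-instance if and only if $(U,\widehat{\mathcal{S}},w,k',p')$ is a yes-instance.
   Context: Maximization version of Weighted $k'$-Exact Cover ($k'$-WEC): given a universe $U$, a family $\mathcal{S}$ of nonempty subsets of $U$, a function $w:\mathcal{S}\to\mathbb{R}$, $k'\in\mathbb{N}$ and $p'\in\mathbb{R}$, decide whether there is a subfamily $\mathcal{S}'\subseteq\mathcal{S}$ of pairwise disjoint sets with $|\bigcup\mathcal{S}'|=k'$ and $\sum_{S\in\mathcal{S}'}w(S)\ge p'$. Representation: given a universe $E$, nonnegative integers $k$ and $p$, a family $\mathcal{S}$ of subsets of $E$ of size $p$, and $w:\mathcal{S}\to\mathbb{R}$, a subfamily $\widehat{\mathcal{S}}\subseteq\mathcal{S}$ max represents $\mathcal{S}$ if for every $X\in\mathcal{S}$ and every $Y\subseteq E\setminus X$ with $|Y|\le k-p$ there is $\widehat{X}\in\widehat{\mathcal{S}}$ disjoint from $Y$ with $w(\widehat{X})\ge w(X)$. *)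

theory Defs
  imports Complex_Main "HOL-Library.Disjoint_Sets"
begin

definition wec_instance :: "'a set \<Rightarrow> 'a set set \<Rightarrow> bool" where
  "wec_instance U S \<longleftrightarrow> finite U \<and> (\<forall>X\<in>S. X \<subseteq> U \<and> X \<noteq> {})"

definition wec_yes :: "'a set \<Rightarrow> 'a set set \<Rightarrow> ('a set \<Rightarrow> real) \<Rightarrow> nat \<Rightarrow> real \<Rightarrow> bool" where
  "wec_yes U S w k' p' \<longleftrightarrow>
     (\<exists>S'. S' \<subseteq> S \<and> finite S' \<and> disjoint S' \<and> card (\<Union>S') = k' \<and> (\<Sum>X\<in>S'. w X) \<ge> p')"

text \<open>Shat max represents A w.r.t. universe E, integers k and p, weight w.
  (A is assumed to be a family of p-subsets of E.)\<close>
definition max_represents ::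
  "'a set \<Rightarrow> nat \<Rightarrow> nat \<Rightarrow> ('a set \<Rightarrow> real) \<Rightarrow> 'a set set \<Rightarrow> 'a set set \<Rightarrow> bool" where
  "max_represents E k p w A Ahat \<longleftrightarrow>
     Ahat \<subseteq> A \<and>
     (\<forall>X\<in>A. \<forall>Y. Y \<subseteq> E - X \<and> card Y \<le> k - p \<longrightarrow>
        (\<exists>Xh\<in>Ahat. Xh \<inter> Y = {} \<and> w Xh \<ge> w X))"

end

theory Submission
  imports Defs
begin

text \<open>Take a solution and repeatedly swap one of its sets X that lies outside the
  representative family for a representative of the same size: the max representation property,
  applied with Y the union of the other sets of the solution (which has exactly k' - |X| elements),
  yields a representative disjoint from Y and at least as heavy. Each swap preserves disjointness
  and the covered cardinality, does not decrease the weight, and reduces the number of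
  non-representative sets, so the process ends with a solution inside the representatives.\<close>

definition exact_packing :: "'a set set \<Rightarrow> nat \<Rightarrow> 'a set set \<Rightarrow> bool" where
  "exact_packing F k P \<longleftrightarrow> P \<subseteq> F \<and> finite P \<and> disjoint P \<and> card (\<Union>P) = k"

lemma wec_yes_iff_exact_packing:
  "wec_yes U F w k p \<longleftrightarrow> (\<exists>P. exact_packing F k P \<and> p \<le> sum w P)"
  unfolding wec_yes_def exact_packing_def by blast

lemma exact_packing_mono: "exact_packing F k P \<Longrightarrow> F \<subseteq> G \<Longrightarrow> exact_packing G k P"
  unfolding exact_packing_def by blast

definition size_max_represents ::
  "'a set \<Rightarrow> nat \<Rightarrow> ('a set \<Rightarrow> real) \<Rightarrow> 'a set set \<Rightarrow> 'a set set \<Rightarrow> bool" where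
  "size_max_represents E k w F T \<longleftrightarrow>
     T \<subseteq> F \<and>
     (\<forall>X\<in>F. \<forall>Y. Y \<subseteq> E - X \<and> card X \<le> k \<and> card Y \<le> k - card X \<longrightarrow>
        (\<exists>Xh\<in>T. card Xh = card X \<and> Xh \<inter> Y = {} \<and> w X \<le> w Xh))"

lemma size_max_represents_UN:
  assumes nonempty: "\<And>X. X \<in> F \<Longrightarrow> 1 \<le> card X"
    and rep: "\<And>i. 1 \<le> i \<Longrightarrow> i \<le> k \<Longrightarrow> max_represents E k i w {X \<in> F. card X = i} (T i)"
  shows "size_max_represents E k w F (\<Union>i\<in>{1..k}. T i)"
  unfolding size_max_represents_def
proof (intro conjI ballI allI impI)
  show "(\<Union>i\<in>{1..k}. T i) \<subseteq> F"
    using rep unfolding max_represents_def by fastforce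
next
  fix X Y assume X: "X \<in> F" and Y: "Y \<subseteq> E - X \<and> card X \<le> k \<and> card Y \<le> k - card X"
  have i: "1 \<le> card X" "card X \<le> k" using nonempty X Y by auto
  with rep[OF i] X Y obtain Xh where "Xh \<in> T (card X)" "Xh \<inter> Y = {}" "w X \<le> w Xh"
    unfolding max_represents_def by blast
  moreover from this(1) rep[OF i] have "card Xh = card X"
    unfolding max_represents_def by blast
  ultimately show "\<exists>Xh\<in>\<Union>i\<in>{1..k}. T i. card Xh = card X \<and> Xh \<inter> Y = {} \<and> w X \<le> w Xh"
    using i by auto
qed

lemma disjoint_exchange:
  fixes w :: "'a set \<Rightarrow> 'b::ab_group_add"
  assumes P: "finite P" "disjoint P" "finite (\<Union>P)" and X: "X \<in> P" "X \<noteq> {}"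
    and Xh: "card Xh = card X" "Xh \<inter> \<Union>(P - {X}) = {}"
  defines "P' \<equiv> insert Xh (P - {X})"
  shows "disjoint P'" and "card (\<Union>P') = card (\<Union>P)" and "sum w P' = sum w P - w X + w Xh"
proof -
  have fin_X: "finite X" using P(3) X(1) by (meson Union_upper finite_subset)
  then have fin_Xh: "finite Xh" and Xh_ne: "Xh \<noteq> {}"
    using Xh(1) X(2) by (auto intro: card_ge_0_finite)
  show "disjoint P'"
    using P(2) Xh(2) unfolding P'_def disjoint_def by blast
  have rest_fin: "finite (\<Union>(P - {X}))" using P(3) by (rule rev_finite_subset) auto
  have X_rest: "X \<inter> \<Union>(P - {X}) = {}"
    using P(2) X(1) unfolding disjoint_def by blast
  have "\<Union>P = X \<union> \<Union>(P - {X})" using X(1) by blast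
  then have "card (\<Union>P) = card X + card (\<Union>(P - {X}))"
    using card_Un_disjoint[OF fin_X rest_fin X_rest] by simp
  moreover have "card (\<Union>P') = card Xh + card (\<Union>(P - {X}))"
    unfolding P'_def using card_Un_disjoint[OF fin_Xh rest_fin Xh(2)] by simp
  ultimately show "card (\<Union>P') = card (\<Union>P)" using Xh(1) by simp
  have "Xh \<notin> P - {X}" using Xh(2) Xh_ne by blast
  then have "sum w P' = w Xh + sum w (P - {X})" unfolding P'_def using P(1) by simp
  moreover have "sum w P = w X + sum w (P - {X})" using P(1) X(1) by (rule sum.remove)
  ultimately show "sum w P' = sum w P - w X + w Xh" by (simp add: algebra_simps)
qed

lemma exact_packing_transfer:
  assumes inst: "wec_instance U F" and rep: "size_max_represents U k w F T"
    and P: "exact_packing F k P"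
  shows "\<exists>Q. exact_packing T k Q \<and> sum w P \<le> sum w Q"
  using P
proof (induction "card (P - T)" arbitrary: P rule: less_induct)
  case less
  show ?case
  proof (cases "P \<subseteq> T")
    case True
    with less.prems show ?thesis unfolding exact_packing_def by blast
  next
    case False
    then obtain X where X: "X \<in> P" "X \<notin> T" by blast
    have P: "P \<subseteq> F" "finite P" "disjoint P" "card (\<Union>P) = k"
      using less.prems unfolding exact_packing_def by auto
    have F: "finite U" "\<And>Z. Z \<in> F \<Longrightarrow> Z \<subseteq> U \<and> Z \<noteq> {}"
      using inst unfolding wec_instance_def by auto
    have fin: "finite (\<Union>P)" using P(1) F by (meson Sup_least finite_subset subset_iff)
    define Y where "Y = \<Union>(P - {X})"
    have XY: "X \<inter> Y = {}" using P(3) X(1) unfolding Y_def disjoint_def by blast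
    have "\<Union>P = X \<union> Y" using X(1) unfolding Y_def by blast
    with fin have "finite X" "finite Y" by auto
    with XY \<open>\<Union>P = X \<union> Y\<close> have card_P: "card (\<Union>P) = card X + card Y"
      by (simp add: card_Un_disjoint)
    have Y_U: "Y \<subseteq> U - X" using XY P(1) F(2) unfolding Y_def by blast
    have "X \<in> F" "card X \<le> k" "card Y \<le> k - card X" using X(1) P(1,4) card_P by auto
    with rep Y_U obtain Xh where Xh: "Xh \<in> T" "card Xh = card X" "Xh \<inter> Y = {}" "w X \<le> w Xh"
      unfolding size_max_represents_def by blast
    define P' where "P' = insert Xh (P - {X})"
    have X_ne: "X \<noteq> {}" using F(2) P(1) X(1) by blast
    note exch = disjoint_exchange[OF P(2,3) fin X(1) X_ne Xh(2) Xh(3)[unfolded Y_def]]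
    have "Xh \<in> F" using rep Xh(1) unfolding size_max_represents_def by blast
    then have "exact_packing F k P'"
      using exch(1,2) P unfolding P'_def exact_packing_def by auto
    moreover have "card (P' - T) < card (P - T)"
      unfolding P'_def using X Xh(1) P(2) by (auto intro!: psubset_card_mono)
    ultimately obtain Q where "exact_packing T k Q" "sum w P' \<le> sum w Q"
      using less.hyps by blast
    then show ?thesis using exch(3)[of w] Xh(4) unfolding P'_def by auto
  qed
qed

theorem lemma4:
  fixes U :: "'a set" and S :: "'a set set" and w :: "'a set \<Rightarrow> real"
    and k' :: nat and p' :: real and Shat :: "nat \<Rightarrow> 'a set set"
  assumes inst: "wec_instance U S"
    and rep: "\<And>i. 1 \<le> i \<Longrightarrow> i \<le> k' \<Longrightarrow>
               max_represents U k' i w {X \<in> S. card X = i} (Shat i)"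
  shows "wec_yes U S w k' p' \<longleftrightarrow> wec_yes U (\<Union>i\<in>{1..k'}. Shat i) w k' p'"
proof -
  have "1 \<le> card X" if "X \<in> S" for X
    using inst that unfolding wec_instance_def
    by (metis One_nat_def Suc_leI card_gt_0_iff finite_subset)
  then have reps: "size_max_represents U k' w S (\<Union>i\<in>{1..k'}. Shat i)"
    using rep by (rule size_max_represents_UN)
  then have sub: "(\<Union>i\<in>{1..k'}. Shat i) \<subseteq> S"
    unfolding size_max_represents_def by blast
  show ?thesis
    unfolding wec_yes_iff_exact_packing
    using exact_packing_transfer[OF inst reps] exact_packing_mono[OF _ sub]
    by (meson order_trans)
qed

end
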